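(* Let $\mathbb V\subset\mathbb W$ be Hilbert spaces with bounded inclusion, $\mathbb V$ dense in $\mathbb W$ and separable, and let $\mathcal L_N,\mathcal L:\mathbb V\to\mathbb W$ be bounded, self-adjoint (on $\mathbb W$ with dense domain $\mathbb V$), with pure-point spectrum. Let $\lambda$ be an eigenvalue of $\mathcal L$ of finite geometric multiplicity and $\delta>0$ such that $\lambda$ is at distance more than $3\delta$ from all other elements of $\sigma(\mathcal L)$. Suppose there is $N_0$ such that for $\delta\le|z-\lambda|\le2\delta$ and $N>N_0$, $z\,\mathrm{id}-\mathcal L_N$ is invertible on $\mathbb W$ and $\|(z\,\mathrm{id}-\mathcal L)^{-1}(\mathcal L-\mathcal L_N)v\|_{\mathbb W}\to0$, $\|(z\,\mathrm{id}-\mathcal L_N)^{-1}(\mathcal L-\mathcal L_N)u\|_{\mathbb W}\to0$ as $N\to\infty$, uniformly in such $z$, for all $\mathbb W$-normalized eigenfunctions $v$ of $\mathcal L_N$ and $u$ of $\mathcal L$ with eigenvalues in $\{|z-\lambda|\le\delta\}$. Assume further that there exist constants $t,N_0>0$ and a continuous function $R:[0,\infty)\to[0,\infty)$ such that $$\|(z\,\mathrm{id}-\mathcal L_N)^{-1}(\mathcal L-\mathcal L_N)u\|_{\mathbb W}\le R(|\lambda|)\max_{\mu\in\sigma(\mathcal L_N)}\frac1{|z-\mu|}\,N^{-t}$$ for $N>N_0$ and $z\notin\sigma(\mathcal L_N)$, whenever $u$ is a normalized eigenfunction of $\mathcal L$ associated to an eigenvalue of modulus at most $|\lambda|$. Then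 if $\lambda_N$ is an eigenvalue of $\mathcal L_N$ with $|\lambda_N-\lambda|<\delta$ for all $N$ sufficiently large, there exist $C,N_0'>1$ such that $|\lambda-\lambda_N|\le CR(|\lambda|)N^{-t}$ for $N>N_0'$. *)

theory Defs
  imports "HOL-Analysis.Analysis"
begin

text \<open>HOL has no class of complex vector spaces, so a complex vector space is modelled as a
real vector space 'w together with a complex structure J (multiplication by the imaginary
unit): J is real-linear and J (J x) = - x.\<close>

definition complex_structure :: "('w::real_vector \<Rightarrow> 'w) \<Rightarrow> bool" where
  "complex_structure J \<longleftrightarrow> linear J \<and> (\<forall>x. J (J x) = - x)"

definition scC :: "('w::real_vector \<Rightarrow> 'w) \<Rightarrow> complex \<Rightarrow> 'w \<Rightarrow> 'w" where
  "scC J c x = Re c *\<^sub>R x + Im c *\<^sub>R J x"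

definition complex_subspace :: "('a::real_vector \<Rightarrow> 'a) \<Rightarrow> 'a set \<Rightarrow> bool" where
  "complex_subspace J S \<longleftrightarrow> 0 \<in> S \<and> (\<forall>x\<in>S. \<forall>y\<in>S. x + y \<in> S) \<and> (\<forall>c. \<forall>x\<in>S. scC J c x \<in> S)"

definition complex_inner_on :: "('a::real_vector \<Rightarrow> 'a) \<Rightarrow> 'a set \<Rightarrow> ('a \<Rightarrow> 'a \<Rightarrow> complex) \<Rightarrow> bool" where
  "complex_inner_on J S ip \<longleftrightarrow>
     (\<forall>x\<in>S. \<forall>y\<in>S. \<forall>z\<in>S. ip (x + y) z = ip x z + ip y z) \<and>
     (\<forall>c. \<forall>x\<in>S. \<forall>y\<in>S. ip (scC J c x) y = c * ip x y) \<and>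
     (\<forall>x\<in>S. \<forall>y\<in>S. ip y x = cnj (ip x y)) \<and>
     (\<forall>x\<in>S. Im (ip x x) = 0 \<and> Re (ip x x) \<ge> 0) \<and>
     (\<forall>x\<in>S. ip x x = 0 \<longrightarrow> x = 0)"

definition hilbert_pair ::
  "('w::{real_normed_vector,complete_space} \<Rightarrow> 'w) \<Rightarrow> ('w \<Rightarrow> 'w \<Rightarrow> complex) \<Rightarrow> ('w \<Rightarrow> 'w \<Rightarrow> complex) \<Rightarrow> 'w set \<Rightarrow> bool" where
  "hilbert_pair J ipW ipV Vs \<longleftrightarrow>
     complex_structure J \<and>
     complex_inner_on J UNIV ipW \<and> (\<forall>x. norm x = sqrt (Re (ipW x x))) \<and>
     complex_subspace J Vs \<and> complex_inner_on J Vs ipV \<and>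
     (\<forall>X::nat \<Rightarrow> 'w. (\<forall>n. X n \<in> Vs) \<and>
          (\<forall>e>0. \<exists>M. \<forall>m\<ge>M. \<forall>n\<ge>M. sqrt (Re (ipV (X m - X n) (X m - X n))) < e)
          \<longrightarrow> (\<exists>l\<in>Vs. \<forall>e>0. \<exists>M. \<forall>n\<ge>M. sqrt (Re (ipV (X n - l) (X n - l))) < e)) \<and>
     (\<exists>D. countable D \<and> D \<subseteq> Vs \<and>
          (\<forall>x\<in>Vs. \<forall>e>0. \<exists>d\<in>D. sqrt (Re (ipV (x - d) (x - d))) < e)) \<and>
     closure Vs = UNIV \<and>
     (\<exists>c. \<forall>x\<in>Vs. norm x \<le> c * sqrt (Re (ipV x x)))"

definition bounded_op_VW :: "('w::real_normed_vector \<Rightarrow> 'w) \<Rightarrow> ('w \<Rightarrow> 'w \<Rightarrow> complex) \<Rightarrow> 'w set \<Rightarrow> ('w \<Rightarrow> 'w) \<Rightarrow> bool" where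
  "bounded_op_VW J ipV Vs L \<longleftrightarrow>
     (\<forall>x\<in>Vs. \<forall>y\<in>Vs. L (x + y) = L x + L y) \<and>
     (\<forall>c. \<forall>x\<in>Vs. L (scC J c x) = scC J c (L x)) \<and>
     (\<exists>K. \<forall>x\<in>Vs. norm (L x) \<le> K * sqrt (Re (ipV x x)))"

text \<open>Self-adjoint as an operator on W with (dense) domain V: symmetric, and the domain
of the adjoint is contained in V.\<close>
definition self_adjoint_on :: "('w::real_vector \<Rightarrow> 'w \<Rightarrow> complex) \<Rightarrow> 'w set \<Rightarrow> ('w \<Rightarrow> 'w) \<Rightarrow> bool" where
  "self_adjoint_on ipW Vs L \<longleftrightarrow>
     (\<forall>x\<in>Vs. \<forall>y\<in>Vs. ipW (L x) y = ipW x (L y)) \<and>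
     (\<forall>y z. (\<forall>x\<in>Vs. ipW (L x) y = ipW x z) \<longrightarrow> y \<in> Vs)"

definition eigvec :: "('w::real_vector \<Rightarrow> 'w) \<Rightarrow> 'w set \<Rightarrow> ('w \<Rightarrow> 'w) \<Rightarrow> complex \<Rightarrow> 'w \<Rightarrow> bool" where
  "eigvec J Vs L \<mu> v \<longleftrightarrow> v \<in> Vs \<and> v \<noteq> 0 \<and> L v = scC J \<mu> v"

definition eigenvalue_of :: "('w::real_vector \<Rightarrow> 'w) \<Rightarrow> 'w set \<Rightarrow> ('w \<Rightarrow> 'w) \<Rightarrow> complex \<Rightarrow> bool" where
  "eigenvalue_of J Vs L \<mu> \<longleftrightarrow> (\<exists>v. eigvec J Vs L \<mu> v)"

definition resolv :: "('w::real_normed_vector \<Rightarrow> 'w) \<Rightarrow> 'w set \<Rightarrow> ('w \<Rightarrow> 'w) \<Rightarrow> complex \<Rightarrow> 'w \<Rightarrow> 'w" where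
  "resolv J Vs L z = inv_into Vs (\<lambda>x. scC J z x - L x)"

definition resolvent_set :: "('w::real_normed_vector \<Rightarrow> 'w) \<Rightarrow> 'w set \<Rightarrow> ('w \<Rightarrow> 'w) \<Rightarrow> complex set" where
  "resolvent_set J Vs L = {z. bij_betw (\<lambda>x. scC J z x - L x) Vs UNIV \<and>
                            (\<exists>K. \<forall>y. norm (resolv J Vs L z y) \<le> K * norm y)}"

definition spec :: "('w::real_normed_vector \<Rightarrow> 'w) \<Rightarrow> 'w set \<Rightarrow> ('w \<Rightarrow> 'w) \<Rightarrow> complex set" where
  "spec J Vs L = - resolvent_set J Vs L"

text \<open>Pure-point spectrum: the eigenvectors span a dense subspace of W.  (The real span of
all eigenvectors coincides with their complex span, as eigenvectors are closed under complex
scaling.)\<close>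
definition pure_point :: "('w::real_normed_vector \<Rightarrow> 'w) \<Rightarrow> 'w set \<Rightarrow> ('w \<Rightarrow> 'w) \<Rightarrow> bool" where
  "pure_point J Vs L \<longleftrightarrow> closure (span {v. \<exists>\<mu>. eigvec J Vs L \<mu> v}) = UNIV"

definition finite_geom_mult :: "('w::real_normed_vector \<Rightarrow> 'w) \<Rightarrow> 'w set \<Rightarrow> ('w \<Rightarrow> 'w) \<Rightarrow> complex \<Rightarrow> bool" where
  "finite_geom_mult J Vs L \<mu> \<longleftrightarrow> (\<exists>B. finite B \<and> {v\<in>Vs. L v = scC J \<mu> v} \<subseteq> span B)"

end

theory Submission
  imports Defs
begin

(* Fix z with |z - lambda| = 3 delta / 2, a point of the annulus where z - L_N is invertible, and a
   normalised eigenvector v of L_N for lambda_N.  The vector (z - L)^-1 (L - L_N) v equals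
   (z - lambda_N) (z - L)^-1 v - v, and it is small by hypothesis.  On the eigenspace of L for mu the
   operator (z - lambda_N) (z - L)^-1 - 1 is multiplication by (mu - lambda_N) / (z - mu), of modulus at
   least 2/5 for mu <> lambda by the spectral gap.  Since eigenvectors of L for distinct eigenvalues are
   orthogonal and span a dense subspace, v lies within 1/4 of the lambda-eigenspace, which yields a
   normalised eigenvector u of L for lambda with |<u, v>| >= 1/2.  Pairing
   f = (z - L_N)^-1 (L - L_N) u with v gives <f, v> (z - lambda_N) = <u, v> (lambda - lambda_N), so
   |lambda - lambda_N| <= 5 delta |f|, and the rate hypothesis together with dist (z, spec L_N) >= delta / 2
   gives |f| <= 2 R(|lambda|) N^-t / delta: the constant C = 10 works. *)

lemma SUP_inverse_dist_le:
  fixes z :: "'a::real_normed_vector"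
  assumes "S \<noteq> {}" and "d > 0" and "\<And>\<mu>. \<mu> \<in> S \<Longrightarrow> d \<le> norm (z - \<mu>)"
  shows "(SUP \<mu>\<in>S. 1 / norm (z - \<mu>)) \<le> 1 / d"
proof (rule cSUP_least)
  fix \<mu> assume "\<mu> \<in> S"
  then show "1 / norm (z - \<mu>) \<le> 1 / d"
    using assms by (intro frac_le) auto
qed (use assms in simp)

lemma dist_ge_outside_annulus:
  fixes z \<mu> c :: "'a::real_normed_vector"
  assumes "norm (z - c) = r" and "\<not> (r - d \<le> norm (\<mu> - c) \<and> norm (\<mu> - c) \<le> r + d)"
  shows "d \<le> norm (z - \<mu>)"
proof -
  have "norm (\<mu> - c) \<le> norm (\<mu> - z) + norm (z - c)"
    using norm_triangle_ineq[of "\<mu> - z" "z - c"] by simp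
  moreover have "norm (z - c) \<le> norm (z - \<mu>) + norm (\<mu> - c)"
    using norm_triangle_ineq[of "z - \<mu>" "\<mu> - c"] by simp
  ultimately show ?thesis
    using assms norm_minus_commute[of \<mu> z] by argo
qed

lemma eventually_sequentially_real_threshold:
  assumes "\<exists>N0. \<forall>N. N0 < real N \<longrightarrow> P N"
  shows "eventually P sequentially"
proof -
  obtain N0 n where "\<forall>N. N0 < real N \<longrightarrow> P N" and "N0 < real n"
    using assms reals_Archimedean2 by blast
  then show ?thesis
    unfolding eventually_sequentially by (metis less_le_trans of_nat_le_iff)
qed

lemma eventually_sequentially_iff_real_threshold_gt:
  "eventually P sequentially \<longleftrightarrow> (\<exists>N0>c. \<forall>N. N0 < real N \<longrightarrow> P N)"
proof
  assume "eventually P sequentially"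
  then obtain M where "\<forall>N\<ge>M. P N"
    unfolding eventually_sequentially by blast
  then show "\<exists>N0>c. \<forall>N. N0 < real N \<longrightarrow> P N"
    by (intro exI[of _ "max (c + 1) (real M)"]) auto
next
  assume "\<exists>N0>c. \<forall>N. N0 < real N \<longrightarrow> P N"
  then show "eventually P sequentially"
    by (intro eventually_sequentially_real_threshold) blast
qed

locale complex_space =
  fixes J :: "'w::real_vector \<Rightarrow> 'w"
  assumes complex_structure: "complex_structure J"
begin

lemma linear_J: "linear J"
  using complex_structure unfolding complex_structure_def by auto

lemma J_J [simp]: "J (J x) = - x"
  using complex_structure unfolding complex_structure_def by auto

lemma J_zero [simp]: "J 0 = 0"
  using linear_J by (rule linear_0)

lemma J_add [simp]: "J (x + y) = J x + J y"
  using linear_J by (rule linear_add)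

lemma J_scaleR [simp]: "J (r *\<^sub>R x) = r *\<^sub>R J x"
  using linear_J by (rule linear_scale)

lemma scC_add_right: "scC J c (x + y) = scC J c x + scC J c y"
  by (simp add: scC_def algebra_simps)

lemma scC_scaleR_right: "scC J c (r *\<^sub>R x) = r *\<^sub>R scC J c x"
  by (simp add: scC_def algebra_simps)

lemma linear_scC: "linear (scC J c)"
  by (rule linearI) (simp_all add: scC_add_right scC_scaleR_right)

lemmas scC_diff_right = linear_diff[OF linear_scC]
  and scC_sum = linear_sum[OF linear_scC]

lemma scC_diff_left: "scC J (a - b) x = scC J a x - scC J b x"
  by (simp add: scC_def algebra_simps)

lemma scC_mult: "scC J a (scC J b x) = scC J (a * b) x"
  by (simp add: scC_def algebra_simps)

lemma scC_of_real [simp]: "scC J (of_real r) x = r *\<^sub>R x"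
  by (simp add: scC_def)

lemma scC_one [simp]: "scC J 1 x = x"
  by (simp add: scC_def)

lemma scC_zero_left [simp]: "scC J 0 x = 0"
  by (simp add: scC_def)

lemma scC_zero_right [simp]: "scC J c 0 = 0"
  by (simp add: scC_def)

end

definition complex_linear_on :: "('w::real_vector \<Rightarrow> 'w) \<Rightarrow> 'w set \<Rightarrow> ('w \<Rightarrow> 'w) \<Rightarrow> bool" where
  "complex_linear_on J Vs L \<longleftrightarrow>
     (\<forall>x\<in>Vs. \<forall>y\<in>Vs. L (x + y) = L x + L y) \<and> (\<forall>c. \<forall>x\<in>Vs. L (scC J c x) = scC J c (L x))"

lemma bounded_op_VW_imp_complex_linear_on: "bounded_op_VW J ipV Vs L \<Longrightarrow> complex_linear_on J Vs L"
  unfolding bounded_op_VW_def complex_linear_on_def by blast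

locale complex_domain = complex_space J for J :: "'w::real_normed_vector \<Rightarrow> 'w" +
  fixes Vs :: "'w set"
  assumes complex_subspace: "complex_subspace J Vs"
begin

lemma scC_in_Vs: "x \<in> Vs \<Longrightarrow> scC J c x \<in> Vs"
  using complex_subspace unfolding complex_subspace_def by blast

lemma subspace_Vs: "subspace Vs"
  using complex_subspace scC_in_Vs[of _ "of_real _"] unfolding complex_subspace_def subspace_def by simp

lemmas zero_in_Vs [simp] = subspace_0[OF subspace_Vs]
  and add_in_Vs = subspace_add[OF subspace_Vs]
  and scaleR_in_Vs = subspace_scale[OF subspace_Vs]
  and sum_in_Vs = subspace_sum[OF subspace_Vs]

context
  fixes L assumes lin: "complex_linear_on J Vs L"
begin

lemma op_add: "x \<in> Vs \<Longrightarrow> y \<in> Vs \<Longrightarrow> L (x + y) = L x + L y"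
  using lin unfolding complex_linear_on_def by blast

lemma op_scC: "x \<in> Vs \<Longrightarrow> L (scC J c x) = scC J c (L x)"
  using lin unfolding complex_linear_on_def by blast

lemma op_zero [simp]: "L 0 = 0"
  using op_scC[of 0 0] by simp

lemma op_scaleR: "x \<in> Vs \<Longrightarrow> L (r *\<^sub>R x) = r *\<^sub>R L x"
  using op_scC[of x "of_real r"] by simp

lemma op_sum: "(\<And>i. i \<in> S \<Longrightarrow> f i \<in> Vs) \<Longrightarrow> L (sum f S) = (\<Sum>i\<in>S. L (f i))"
  by (induction S rule: infinite_finite_induct) (simp_all add: op_add sum_in_Vs)

lemma eigvec_sgn:
  assumes "eigvec J Vs L \<mu> v"
  shows "eigvec J Vs L \<mu> (sgn v)"
proof -
  have v: "v \<in> Vs" "v \<noteq> 0" "L v = scC J \<mu> v"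
    using assms unfolding eigvec_def by auto
  have "L (sgn v) = scC J \<mu> (sgn v)"
    unfolding sgn_div_norm divide_inverse_commute op_scaleR[OF v(1)] v(3) scC_scaleR_right ..
  then show ?thesis
    unfolding eigvec_def using v by (simp add: sgn_div_norm scaleR_in_Vs)
qed

lemma eigenvalue_in_spec:
  assumes "eigenvalue_of J Vs L \<mu>"
  shows "\<mu> \<in> spec J Vs L"
  unfolding spec_def
proof
  assume "\<mu> \<in> resolvent_set J Vs L"
  with assms obtain v where v: "eigvec J Vs L \<mu> v" and inj: "inj_on (\<lambda>x. scC J \<mu> x - L x) Vs"
    unfolding eigenvalue_of_def resolvent_set_def bij_betw_def by blast
  have "scC J \<mu> v - L v = scC J \<mu> 0 - L 0"
    using v unfolding eigvec_def by simp
  then have "v = 0"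
    using inj_onD[OF inj] v zero_in_Vs unfolding eigvec_def by blast
  with v show False
    unfolding eigvec_def by simp
qed

lemma span_eigvecs_decomposition:
  assumes "s \<in> span {x. \<exists>\<mu>. eigvec J Vs L \<mu> x}"
  obtains M y where "finite M" "\<And>m. m \<in> M \<Longrightarrow> eigenvalue_of J Vs L m"
    "\<And>m. m \<notin> M \<Longrightarrow> y m = 0" "\<And>m. y m \<in> Vs" "\<And>m. L (y m) = scC J m (y m)"
    "s = (\<Sum>m\<in>M. y m)"
proof -
  obtain B r where B: "finite B" "B \<subseteq> {x. \<exists>\<mu>. eigvec J Vs L \<mu> x}"
    and s: "s = (\<Sum>x\<in>B. r x *\<^sub>R x)"
    using assms unfolding span_explicit by blast
  define ev where "ev x = (SOME \<mu>. eigvec J Vs L \<mu> x)" for x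
  have ev: "eigvec J Vs L (ev x) x" if "x \<in> B" for x
    using B(2) that unfolding ev_def by (auto intro: someI_ex)
  define y where "y m = (\<Sum>x\<in>{x\<in>B. ev x = m}. r x *\<^sub>R x)" for m
  have B_Vs: "r x *\<^sub>R x \<in> Vs" if "x \<in> B" for x
    using ev[OF that] by (simp add: eigvec_def scaleR_in_Vs)
  show thesis
  proof
    show "finite (ev ` B)"
      using B(1) by simp
    show "eigenvalue_of J Vs L m" if "m \<in> ev ` B" for m
      using that ev unfolding eigenvalue_of_def by blast
    show "y m = 0" if "m \<notin> ev ` B" for m
    proof -
      have empty: "{x\<in>B. ev x = m} = {}"
        using that by auto
      show ?thesis
        unfolding y_def empty by simp
    qed
    show "y m \<in> Vs" for m
      unfolding y_def using B_Vs by (intro sum_in_Vs) simp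
    show "L (y m) = scC J m (y m)" for m
    proof -
      have "L (y m) = (\<Sum>x\<in>{x\<in>B. ev x = m}. L (r x *\<^sub>R x))"
        unfolding y_def using B_Vs by (intro op_sum) simp
      also have "\<dots> = (\<Sum>x\<in>{x\<in>B. ev x = m}. scC J m (r x *\<^sub>R x))"
        using ev by (intro sum.cong) (auto simp: op_scaleR scC_scaleR_right eigvec_def)
      finally show ?thesis
        unfolding y_def scC_sum .
    qed
    show "s = (\<Sum>m\<in>ev ` B. y m)"
      unfolding s y_def by (rule sum.group[symmetric]) (use B(1) in auto)
  qed
qed

context
  fixes z assumes z: "z \<in> resolvent_set J Vs L"
begin

lemma bij_betw_resolvent: "bij_betw (\<lambda>x. scC J z x - L x) Vs UNIV"
  using z unfolding resolvent_set_def by blast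

lemma resolv_in_Vs: "resolv J Vs L z y \<in> Vs"
  using bij_betw_resolvent unfolding resolv_def bij_betw_def by (simp add: inv_into_into)

lemma resolv_right_inverse: "scC J z (resolv J Vs L z y) - L (resolv J Vs L z y) = y"
  using bij_betw_inv_into_right[OF bij_betw_resolvent] unfolding resolv_def by simp

lemma resolv_left_inverse: "x \<in> Vs \<Longrightarrow> resolv J Vs L z (scC J z x - L x) = x"
  using bij_betw_inv_into_left[OF bij_betw_resolvent] unfolding resolv_def by simp

lemma resolv_add: "resolv J Vs L z (a + b) = resolv J Vs L z a + resolv J Vs L z b"
proof -
  let ?T = "resolv J Vs L z"
  have "scC J z (?T a + ?T b) - L (?T a + ?T b) = a + b"
    using resolv_right_inverse[of a] resolv_right_inverse[of b]
    by (simp add: op_add resolv_in_Vs scC_add_right algebra_simps)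
  then show ?thesis
    by (metis resolv_left_inverse add_in_Vs resolv_in_Vs)
qed

lemma resolv_scC: "resolv J Vs L z (scC J c a) = scC J c (resolv J Vs L z a)"
proof -
  let ?T = "resolv J Vs L z"
  have "scC J z (scC J c (?T a)) - L (scC J c (?T a)) = scC J c (scC J z (?T a) - L (?T a))"
    by (simp add: op_scC resolv_in_Vs scC_mult scC_diff_right mult.commute)
  also have "\<dots> = scC J c a"
    by (simp only: resolv_right_inverse)
  finally show ?thesis
    by (metis resolv_left_inverse scC_in_Vs resolv_in_Vs)
qed

lemma bounded_linear_resolv: "bounded_linear (resolv J Vs L z)"
proof -
  obtain K where "\<And>y. norm (resolv J Vs L z y) \<le> K * norm y"
    using z unfolding resolvent_set_def by blast
  then show ?thesis
    using resolv_add resolv_scC[of "of_real _"] by (intro bounded_linear_intro[of _ K]) (auto simp: mult.commute)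
qed

lemmas linear_resolv = bounded_linear.linear[OF bounded_linear_resolv]

lemma resolv_eigen_defect:
  assumes "w \<in> Vs"
  shows "resolv J Vs L z (scC J \<mu> w - L w) = w - scC J (z - \<mu>) (resolv J Vs L z w)"
proof -
  have "scC J \<mu> w - L w = (scC J z w - L w) - scC J (z - \<mu>) w"
    by (simp add: scC_diff_left)
  then have "resolv J Vs L z (scC J \<mu> w - L w)
      = resolv J Vs L z (scC J z w - L w) - resolv J Vs L z (scC J (z - \<mu>) w)"
    by (simp only: linear_diff[OF linear_resolv])
  then show ?thesis
    by (simp only: resolv_left_inverse[OF assms] resolv_scC)
qed

lemma resolv_neg_eigen_defect:
  assumes "w \<in> Vs"
  shows "resolv J Vs L z (L w - scC J \<mu> w) = scC J (z - \<mu>) (resolv J Vs L z w) - w"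
proof -
  have "resolv J Vs L z (L w - scC J \<mu> w) = - resolv J Vs L z (scC J \<mu> w - L w)"
    using linear_neg[OF linear_resolv, of "scC J \<mu> w - L w"] by simp
  then show ?thesis
    by (simp add: resolv_eigen_defect[OF assms])
qed

text \<open>No hypothesis \<open>z \<noteq> m\<close> is needed: for \<open>z = m\<close> the eigenvector equation forces \<open>y = 0\<close>,
  and \<open>1 / 0 = 0\<close>.\<close>

lemma resolv_eigvec:
  assumes "y \<in> Vs" and "L y = scC J m y"
  shows "resolv J Vs L z y = scC J (1 / (z - m)) y"
proof -
  have y: "y = scC J (z - m) (resolv J Vs L z y)"
    using resolv_eigen_defect[OF assms(1), of m] assms(2) linear_0[OF linear_resolv] by simp
  show ?thesis
  proof (cases "z = m")
    case True
    then show ?thesis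
      using y linear_0[OF linear_resolv] by simp
  next
    case False
    then show ?thesis
      by (subst (2) y) (simp add: scC_mult)
  qed
qed

end
end
end
locale complex_inner_space = complex_space J for J :: "'w::real_normed_vector \<Rightarrow> 'w" +
  fixes ip :: "'w \<Rightarrow> 'w \<Rightarrow> complex"
  assumes complex_inner: "complex_inner_on J UNIV ip"
    and norm_eq_sqrt_ip: "\<And>x. norm x = sqrt (Re (ip x x))"
begin

lemma ip_add_left: "ip (x + y) z = ip x z + ip y z"
  using complex_inner unfolding complex_inner_on_def ball_UNIV by (elim conjE) blast

lemma ip_scC_left: "ip (scC J c x) y = c * ip x y"
  using complex_inner unfolding complex_inner_on_def ball_UNIV by (elim conjE) blast

lemma ip_commute: "ip y x = cnj (ip x y)"
  using complex_inner unfolding complex_inner_on_def ball_UNIV by (elim conjE) blast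

lemma ip_self: "ip x x = of_real ((norm x)\<^sup>2)"
proof -
  have "Im (ip x x) = 0" "Re (ip x x) \<ge> 0"
    using complex_inner unfolding complex_inner_on_def ball_UNIV by (elim conjE, blast)+
  then show ?thesis
    using norm_eq_sqrt_ip[of x] by (simp add: complex_eq_iff)
qed

lemma ip_add_right: "ip z (x + y) = ip z x + ip z y"
  using ip_commute[of z] ip_add_left[of x y z] by simp

lemma ip_scC_right: "ip x (scC J c y) = cnj c * ip x y"
  using ip_commute[of x] ip_scC_left[of c y x] by simp

lemma linear_ip_left: "linear (\<lambda>x. ip x y)"
  by (rule linearI) (simp_all add: ip_add_left ip_scC_left[of "of_real _", simplified] scaleR_conv_of_real)

lemma linear_ip_right: "linear (ip x)"
  by (rule linearI) (simp_all add: ip_add_right ip_scC_right[of _ "of_real _", simplified] scaleR_conv_of_real)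

lemmas ip_diff_left = linear_diff[OF linear_ip_left]
  and ip_diff_right = linear_diff[OF linear_ip_right]
  and ip_sum_right = linear_sum[OF linear_ip_right]

lemma norm_scC: "norm (scC J c x) = cmod c * norm x"
proof -
  have "of_real ((norm (scC J c x))\<^sup>2) = ip (scC J c x) (scC J c x)"
    by (rule ip_self[symmetric])
  also have "\<dots> = c * cnj c * ip x x"
    by (simp add: ip_scC_left ip_scC_right mult.assoc)
  also have "\<dots> = of_real ((cmod c * norm x)\<^sup>2)"
    by (simp add: ip_self complex_norm_square power_mult_distrib del: of_real_power)
  finally show ?thesis
    by (simp only: of_real_eq_iff power2_eq_iff_nonneg norm_ge_zero zero_le_mult_iff) simp
qed

lemma bounded_linear_scC: "bounded_linear (scC J c)"
  using linear_scC[of c] by (intro bounded_linear_intro[of _ "cmod c"])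
    (simp_all add: linear_add linear_scale norm_scC mult.commute)

lemma norm_ip_le: "cmod (ip x y) \<le> norm x * norm y"
proof (cases "y = 0")
  case True
  then show ?thesis
    using linear_0[OF linear_ip_right] by simp
next
  case False
  define a where "a = ip x y"
  define n where "n = (norm y)\<^sup>2"
  have n: "n > 0"
    using False by (simp add: n_def)
  define w where "w = x - scC J (a / n) y"
  have "ip w w = of_real ((norm x)\<^sup>2 - (cmod a)\<^sup>2 / n)"
    unfolding w_def using n
    by (simp add: ip_diff_left ip_diff_right ip_scC_left ip_scC_right ip_commute[of y x]
        ip_self[of x] ip_self[of y] a_def[symmetric] n_def[symmetric] complex_norm_square field_simps
        del: of_real_power)
  then have "0 \<le> (norm x)\<^sup>2 - (cmod a)\<^sup>2 / n"
    unfolding ip_self of_real_eq_iff by (metis zero_le_power2)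
  then have "(cmod a)\<^sup>2 \<le> (norm x * norm y)\<^sup>2"
    using n by (simp add: n_def field_simps power_mult_distrib)
  then show ?thesis
    unfolding a_def by (rule power2_le_imp_le) simp
qed

lemma norm_sum_orthogonal:
  assumes "finite S" and "\<And>i j. i \<in> S \<Longrightarrow> j \<in> S \<Longrightarrow> i \<noteq> j \<Longrightarrow> ip (f i) (f j) = 0"
  shows "(norm (sum f S))\<^sup>2 = (\<Sum>i\<in>S. (norm (f i))\<^sup>2)"
  using assms
proof (induction S rule: finite_induct)
  case (insert a F)
  have "ip (f a) (sum f F) = 0"
    unfolding ip_sum_right using insert by (intro sum.neutral) auto
  then have "ip (f a + sum f F) (f a + sum f F) = ip (f a) (f a) + ip (sum f F) (sum f F)"
    using ip_commute[of "sum f F" "f a"] by (simp add: ip_add_left ip_add_right)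
  then have "(norm (f a + sum f F))\<^sup>2 = (norm (f a))\<^sup>2 + (norm (sum f F))\<^sup>2"
    by (simp only: ip_self of_real_add[symmetric] of_real_eq_iff)
  with insert show ?case
    by simp
qed simp

lemma norm_sum_orthogonal_scaled_ge:
  assumes "finite M" and "M' \<subseteq> M" and "\<kappa> \<ge> 0"
    and orth: "\<And>m m'. m \<in> M \<Longrightarrow> m' \<in> M \<Longrightarrow> m \<noteq> m' \<Longrightarrow> ip (y m) (y m') = 0"
    and "\<And>m. m \<in> M' \<Longrightarrow> \<kappa> \<le> cmod (c m)"
  shows "\<kappa> * norm (\<Sum>m\<in>M'. y m) \<le> norm (\<Sum>m\<in>M. scC J (c m) (y m))"
proof (rule power2_le_imp_le)
  have "finite M'"
    using assms(1,2) by (rule finite_subset[rotated])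
  then have "(\<kappa> * norm (\<Sum>m\<in>M'. y m))\<^sup>2 = (\<Sum>m\<in>M'. (\<kappa> * norm (y m))\<^sup>2)"
    using orth assms(2) by (simp add: power_mult_distrib norm_sum_orthogonal sum_distrib_left subset_eq)
  also have "\<dots> \<le> (\<Sum>m\<in>M'. (norm (scC J (c m) (y m)))\<^sup>2)"
    using assms(3,5) by (intro sum_mono power_mono) (auto simp: norm_scC mult_right_mono)
  also have "\<dots> \<le> (\<Sum>m\<in>M. (norm (scC J (c m) (y m)))\<^sup>2)"
    using assms(1,2) by (intro sum_mono2) auto
  also have "\<dots> = (norm (\<Sum>m\<in>M. scC J (c m) (y m)))\<^sup>2"
    using assms(1) orth by (intro norm_sum_orthogonal[symmetric]) (simp_all add: ip_scC_left ip_scC_right)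
  finally show "(\<kappa> * norm (\<Sum>m\<in>M'. y m))\<^sup>2 \<le> (norm (\<Sum>m\<in>M. scC J (c m) (y m)))\<^sup>2" .
qed simp

lemma norm_diff_le_ip_sgn:
  assumes "p \<noteq> 0"
  shows "norm p - norm (v - p) \<le> cmod (ip (sgn p) v)"
proof -
  have "sgn p = scC J (of_real (inverse (norm p))) p"
    unfolding scC_of_real by (simp add: sgn_div_norm)
  then have "ip (sgn p) p = of_real (inverse (norm p)) * ip p p"
    by (simp only: ip_scC_left)
  then have "ip (sgn p) p = of_real (norm p)"
    using assms by (simp add: ip_self power2_eq_square)
  moreover have "ip (sgn p) v = ip (sgn p) p + ip (sgn p) (v - p)"
    by (simp add: ip_diff_right)
  moreover have "cmod (ip (sgn p) (v - p)) \<le> norm (v - p)"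
    using norm_ip_le[of "sgn p" "v - p"] assms by (simp add: norm_sgn)
  ultimately show ?thesis
    using norm_diff_ineq[of "of_real (norm p)" "ip (sgn p) (v - p)"] by simp
qed

end

definition symmetric_on :: "('w \<Rightarrow> 'w \<Rightarrow> complex) \<Rightarrow> 'w set \<Rightarrow> ('w \<Rightarrow> 'w) \<Rightarrow> bool" where
  "symmetric_on ip Vs L \<longleftrightarrow> (\<forall>x\<in>Vs. \<forall>y\<in>Vs. ip (L x) y = ip x (L y))"

lemma self_adjoint_on_imp_symmetric_on: "self_adjoint_on ip Vs L \<Longrightarrow> symmetric_on ip Vs L"
  unfolding self_adjoint_on_def symmetric_on_def by blast

locale complex_inner_domain = complex_domain J Vs + complex_inner_space J ip
  for J :: "'w::real_normed_vector \<Rightarrow> 'w" and Vs ip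
begin

lemma eigenvalue_real:
  assumes sym: "symmetric_on ip Vs L" and "eigenvalue_of J Vs L \<mu>"
  shows "Im \<mu> = 0"
proof -
  obtain v where v: "v \<in> Vs" "v \<noteq> 0" "L v = scC J \<mu> v"
    using assms(2) unfolding eigenvalue_of_def eigvec_def by blast
  have "\<mu> * ip v v = ip (L v) v"
    by (simp add: v ip_scC_left)
  also have "\<dots> = ip v (L v)"
    using sym v unfolding symmetric_on_def by blast
  also have "\<dots> = cnj \<mu> * ip v v"
    by (simp add: v ip_scC_right)
  finally have "\<mu> = cnj \<mu>"
    using v(2) by (simp add: ip_self)
  then show ?thesis
    by (simp add: complex_eq_iff)
qed

lemma ip_eigvecs_orthogonal:
  assumes sym: "symmetric_on ip Vs L"
    and x: "x \<in> Vs" "L x = scC J \<mu> x" and y: "y \<in> Vs" "L y = scC J \<nu> y"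
    and "Im \<nu> = 0" and "\<mu> \<noteq> \<nu>"
  shows "ip x y = 0"
proof -
  have "\<mu> * ip x y = ip (L x) y"
    by (simp add: x ip_scC_left)
  also have "\<dots> = ip x (L y)"
    using sym x y unfolding symmetric_on_def by blast
  also have "\<dots> = \<nu> * ip x y"
    using \<open>Im \<nu> = 0\<close> by (simp add: y ip_scC_right complex_eq_iff)
  finally show ?thesis
    using \<open>\<mu> \<noteq> \<nu>\<close> by simp
qed

lemma ip_resolv_eigen_defect:
  assumes lin: "complex_linear_on J Vs L" and sym: "symmetric_on ip Vs L"
    and z: "z \<in> resolvent_set J Vs L" and v: "eigvec J Vs L a v" and u: "u \<in> Vs"
  shows "ip (resolv J Vs L z (scC J lam u - L u)) v * (z - a) = ip u v * (lam - a)"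
proof -
  let ?T = "resolv J Vs L z"
  have "Im a = 0"
    using eigenvalue_real[OF sym] v unfolding eigenvalue_of_def by blast
  then have a: "cnj a = a"
    by (simp add: complex_eq_iff)
  have Tu: "?T u \<in> Vs"
    by (rule resolv_in_Vs[OF lin z])
  have "ip u v = ip (scC J z (?T u) - L (?T u)) v"
    by (simp only: resolv_right_inverse[OF lin z])
  also have "\<dots> = z * ip (?T u) v - ip (?T u) (L v)"
    using sym Tu v unfolding symmetric_on_def eigvec_def by (simp add: ip_diff_left ip_scC_left)
  also have "\<dots> = (z - a) * ip (?T u) v"
    using v a unfolding eigvec_def by (simp add: ip_scC_right algebra_simps)
  finally have Tu_v: "ip u v = (z - a) * ip (?T u) v" .
  have "ip (?T (scC J lam u - L u)) v = ip u v - (z - lam) * ip (?T u) v"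
    by (simp add: resolv_eigen_defect[OF lin z u] ip_diff_left ip_scC_left)
  also have "\<dots> = (lam - a) * ip (?T u) v"
    unfolding Tu_v by (simp add: algebra_simps)
  finally have "ip (?T (scC J lam u - L u)) v = (lam - a) * ip (?T u) v" .
  then show ?thesis
    unfolding Tu_v by (simp only: mult_ac)
qed

lemma eigenvalue_diff_le_resolv_defect:
  assumes lin: "complex_linear_on J Vs L" and sym: "symmetric_on ip Vs L"
    and z: "z \<in> resolvent_set J Vs L" and v: "eigvec J Vs L a v" "norm v = 1" and u: "u \<in> Vs"
  shows "cmod (ip u v) * cmod (lam - a) \<le> norm (resolv J Vs L z (scC J lam u - L u)) * cmod (z - a)"
proof -
  let ?f = "resolv J Vs L z (scC J lam u - L u)"
  have "cmod (ip u v) * cmod (lam - a) = cmod (ip ?f v) * cmod (z - a)"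
    using ip_resolv_eigen_defect[OF lin sym z v(1) u] by (metis norm_mult)
  also have "\<dots> \<le> norm ?f * cmod (z - a)"
    using norm_ip_le[of ?f v] v(2) by (intro mult_right_mono) simp_all
  finally show ?thesis .
qed

lemma span_eigvecs_near_eigenspace:
  assumes lin: "complex_linear_on J Vs L" and sym: "symmetric_on ip Vs L"
    and z: "z \<in> resolvent_set J Vs L" and \<kappa>: "\<kappa> \<ge> 0"
    and sep: "\<And>m. eigenvalue_of J Vs L m \<Longrightarrow> m \<noteq> lam \<Longrightarrow> \<kappa> * cmod (z - m) \<le> cmod (m - a)"
    and s: "s \<in> span {x. \<exists>\<mu>. eigvec J Vs L \<mu> x}"
  obtains p where "p \<in> Vs" "L p = scC J lam p"
    "\<kappa> * norm (s - p) \<le> norm (scC J (z - a) (resolv J Vs L z s) - s)"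
proof -
  obtain M y where M: "finite M" and ev: "\<And>m. m \<in> M \<Longrightarrow> eigenvalue_of J Vs L m"
    and y0: "\<And>m. m \<notin> M \<Longrightarrow> y m = 0" and yV: "\<And>m. y m \<in> Vs"
    and yL: "\<And>m. L (y m) = scC J m (y m)" and s_eq: "s = (\<Sum>m\<in>M. y m)"
    using span_eigvecs_decomposition[OF lin s] by blast
  define c where "c m = (m - a) / (z - m)" for m
  have z_ne: "z \<noteq> m" if "m \<in> M" for m
    using z eigenvalue_in_spec[OF lin ev[OF that]] unfolding spec_def by auto
  have defect_eigvec: "scC J (z - a) (resolv J Vs L z (y m)) - y m = scC J (c m) (y m)" if "m \<in> M" for m
  proof -
    have "(z - a) * (1 / (z - m)) - 1 = c m"
      using z_ne[OF that] by (simp add: c_def field_simps)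
    then show ?thesis
      using scC_diff_left[of "(z - a) * (1 / (z - m))" 1 "y m"]
      by (simp add: resolv_eigvec[OF lin z yV yL] scC_mult)
  qed
  have defect_sum: "scC J (z - a) (resolv J Vs L z s) - s = (\<Sum>m\<in>M. scC J (c m) (y m))"
    unfolding s_eq linear_sum[OF linear_resolv[OF lin z]] scC_sum sum_subtractf[symmetric]
    by (rule sum.cong) (simp_all add: defect_eigvec)
  have orth: "ip (y m) (y m') = 0" if "m \<in> M" "m' \<in> M" "m \<noteq> m'" for m m'
    using ip_eigvecs_orthogonal[OF sym yV yL yV yL eigenvalue_real[OF sym ev[OF that(2)]] that(3)] .
  have c_ge: "\<kappa> \<le> cmod (c m)" if "m \<in> M - {lam}" for m
    using sep[OF ev] z_ne that by (auto simp: c_def norm_divide pos_le_divide_eq)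
  have "s - y lam = (\<Sum>m\<in>M - {lam}. y m)"
    using y0 M by (cases "lam \<in> M") (simp_all add: s_eq sum_diff1)
  then show thesis
    using that[OF yV yL] defect_sum
      norm_sum_orthogonal_scaled_ge[where M' = "M - {lam}" and y = y and c = c, OF M _ \<kappa> orth c_ge]
    by auto
qed

lemma near_eigenspace:
  assumes lin: "complex_linear_on J Vs L" and sym: "symmetric_on ip Vs L" and pp: "pure_point J Vs L"
    and z: "z \<in> resolvent_set J Vs L" and \<kappa>: "\<kappa> > 0"
    and sep: "\<And>m. eigenvalue_of J Vs L m \<Longrightarrow> m \<noteq> lam \<Longrightarrow> \<kappa> * cmod (z - m) \<le> cmod (m - a)"
    and \<eta>: "\<eta> > 0"
  obtains p where "p \<in> Vs" "L p = scC J lam p"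
    "norm (v - p) \<le> norm (scC J (z - a) (resolv J Vs L z v) - v) / \<kappa> + \<eta>"
proof -
  define G where "G x = scC J (z - a) (resolv J Vs L z x) - x" for x
  have "bounded_linear G"
    unfolding G_def using bounded_linear_resolv[OF lin z]
    by (intro bounded_linear_sub bounded_linear_compose[OF bounded_linear_scC] bounded_linear_ident)
  then obtain A where A: "A > 0" "\<And>x. norm (G x) \<le> norm x * A"
    using bounded_linear.pos_bounded by blast
  define \<eta>' where "\<eta>' = \<eta> * \<kappa> / (\<kappa> + A)"
  have "v \<in> closure (span {x. \<exists>\<mu>. eigvec J Vs L \<mu> x})"
    using pp unfolding pure_point_def by simp
  moreover have "\<eta>' > 0"
    using \<eta> \<kappa> A by (simp add: \<eta>'_def)
  ultimately obtain s where s: "s \<in> span {x. \<exists>\<mu>. eigvec J Vs L \<mu> x}" and sv: "dist s v < \<eta>'"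
    unfolding closure_approachable by blast
  obtain p where p: "p \<in> Vs" "L p = scC J lam p" and sp: "\<kappa> * norm (s - p) \<le> norm (G s)"
    using span_eigvecs_near_eigenspace[OF lin sym z less_imp_le[OF \<kappa>] sep s] unfolding G_def by blast
  have "G s = G v + G (s - v)"
    using linear_diff[OF bounded_linear.linear[OF \<open>bounded_linear G\<close>], of s v] by simp
  moreover have "norm (G (s - v)) \<le> \<eta>' * A"
    using order_trans[OF A(2) mult_right_mono[OF less_imp_le[OF sv[unfolded dist_norm]]]] A(1)
    by simp
  ultimately have Gs: "norm (G s) \<le> norm (G v) + \<eta>' * A"
    using norm_triangle_ineq[of "G v" "G (s - v)"] by simp
  have "\<kappa> * norm (v - s) \<le> \<kappa> * \<eta>'"
    using sv \<kappa> by (intro mult_left_mono) (simp_all add: dist_norm norm_minus_commute)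
  moreover have "\<kappa> * norm (v - p) \<le> \<kappa> * norm (v - s) + \<kappa> * norm (s - p)"
    using norm_triangle_ineq[of "v - s" "s - p"] \<kappa> by (simp flip: distrib_left)
  ultimately have "\<kappa> * norm (v - p) \<le> \<kappa> * \<eta>' + (norm (G v) + \<eta>' * A)"
    using sp Gs by linarith
  also have "\<dots> = norm (G v) + \<eta>' * (\<kappa> + A)"
    by (simp add: algebra_simps)
  also have "\<eta>' * (\<kappa> + A) = \<kappa> * \<eta>"
    using \<kappa> A by (simp add: \<eta>'_def)
  finally show thesis
    using that[OF p] \<kappa> unfolding G_def by (simp add: field_simps)
qed

lemma exists_eigvec_overlap:
  assumes lin: "complex_linear_on J Vs L" and sym: "symmetric_on ip Vs L" and pp: "pure_point J Vs L"
    and gap: "\<And>m. eigenvalue_of J Vs L m \<Longrightarrow> m \<noteq> lam \<Longrightarrow> 3 * \<delta> < cmod (m - lam)"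
    and z: "z \<in> resolvent_set J Vs L" "cmod (z - lam) = 3/2 * \<delta>" and a: "cmod (a - lam) < \<delta>"
    and v: "norm v = 1" and defect: "norm (scC J (z - a) (resolv J Vs L z v) - v) \<le> 1/20"
  obtains u where "eigvec J Vs L lam u" "norm u = 1" "1/2 \<le> cmod (ip u v)"
proof -
  have sep: "2/5 * cmod (z - m) \<le> cmod (m - a)" if "eigenvalue_of J Vs L m" "m \<noteq> lam" for m
  proof -
    have "cmod (z - m) \<le> cmod (z - lam) + cmod (m - lam)"
      using norm_triangle_ineq4[of "z - lam" "m - lam"] by simp
    moreover have "cmod (m - lam) - cmod (a - lam) \<le> cmod (m - a)"
      using norm_triangle_ineq2[of "m - lam" "a - lam"] by simp
    ultimately show ?thesis
      using gap[OF that] z(2) a norm_ge_zero[of "a - lam"] by linarith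
  qed
  obtain p where p: "p \<in> Vs" "L p = scC J lam p"
    and "norm (v - p) \<le> norm (scC J (z - a) (resolv J Vs L z v) - v) / (2/5) + 1/8"
    using near_eigenspace[OF lin sym pp z(1) _ sep, where \<eta> = "1/8" and v = v] by auto
  then have vp: "norm (v - p) \<le> 1/4"
    using defect by simp
  then have "p \<noteq> 0"
    using v by auto
  show thesis
  proof (rule that)
    show "eigvec J Vs L lam (sgn p)"
      using eigvec_sgn[OF lin] p \<open>p \<noteq> 0\<close> unfolding eigvec_def by blast
    show "norm (sgn p) = 1"
      using \<open>p \<noteq> 0\<close> by (simp add: norm_sgn)
    show "1/2 \<le> cmod (ip (sgn p) v)"
      using norm_diff_le_ip_sgn[OF \<open>p \<noteq> 0\<close>, of v] norm_triangle_ineq3[of v p] v vp by linarith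
  qed
qed

lemma eigenvalue_perturbation_bound:
  assumes lin: "complex_linear_on J Vs L" and lin': "complex_linear_on J Vs L'"
    and sym: "symmetric_on ip Vs L" and sym': "symmetric_on ip Vs L'" and pp: "pure_point J Vs L"
    and gap: "\<And>\<mu>. \<mu> \<in> spec J Vs L \<Longrightarrow> \<mu> \<noteq> lam \<Longrightarrow> 3 * \<delta> < cmod (\<mu> - lam)"
    and annulus: "\<And>w. \<delta> \<le> cmod (w - lam) \<Longrightarrow> cmod (w - lam) \<le> 2 * \<delta> \<Longrightarrow> w \<in> resolvent_set J Vs L'"
    and z: "cmod (z - lam) = 3/2 * \<delta>"
    and v: "eigvec J Vs L' a v" "norm v = 1" and a: "cmod (a - lam) < \<delta>"
    and defect: "norm (resolv J Vs L z (L v - L' v)) \<le> 1/20"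
    and rate: "\<And>u. eigvec J Vs L lam u \<Longrightarrow> norm u = 1 \<Longrightarrow>
       norm (resolv J Vs L' z (L u - L' u)) \<le> \<rho> * (SUP \<mu>\<in>spec J Vs L'. 1 / cmod (z - \<mu>))"
    and \<rho>: "\<rho> \<ge> 0"
  shows "cmod (lam - a) \<le> 10 * \<rho>"
proof -
  have \<delta>: "\<delta> > 0"
    using a norm_ge_zero[of "a - lam"] by linarith
  have zL: "z \<in> resolvent_set J Vs L"
    using gap[of z] z \<delta> unfolding spec_def by force
  have zL': "z \<in> resolvent_set J Vs L'"
    using annulus z \<delta> by simp
  obtain u where u: "eigvec J Vs L lam u" "norm u = 1" "1/2 \<le> cmod (ip u v)"
  proof (rule exists_eigvec_overlap[OF lin sym pp _ zL z a v(2)])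
    show "3 * \<delta> < cmod (m - lam)" if "eigenvalue_of J Vs L m" "m \<noteq> lam" for m
      using gap eigenvalue_in_spec[OF lin] that by blast
    show "norm (scC J (z - a) (resolv J Vs L z v) - v) \<le> 1/20"
      using defect v(1) resolv_neg_eigen_defect[OF lin zL] unfolding eigvec_def by auto
  qed
  have "(SUP \<mu>\<in>spec J Vs L'. 1 / cmod (z - \<mu>)) \<le> 1 / (\<delta> / 2)"
    using eigenvalue_in_spec[OF lin'] v(1) annulus \<delta>
    by (intro SUP_inverse_dist_le dist_ge_outside_annulus[OF z])
      (auto simp: eigenvalue_of_def spec_def)
  then have f: "norm (resolv J Vs L' z (scC J lam u - L' u)) \<le> \<rho> * (2 / \<delta>)"
    using rate[OF u(1,2)] mult_left_mono[OF _ \<rho>] u(1) unfolding eigvec_def by fastforce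
  have za: "cmod (z - a) \<le> 5/2 * \<delta>"
    using z a norm_triangle_ineq4[of "z - lam" "a - lam"] by simp
  have "1/2 * cmod (lam - a) \<le> cmod (ip u v) * cmod (lam - a)"
    using u(3) by (intro mult_right_mono) simp_all
  also have "\<dots> \<le> norm (resolv J Vs L' z (scC J lam u - L' u)) * cmod (z - a)"
    using u(1) by (intro eigenvalue_diff_le_resolv_defect[OF lin' sym' zL' v]) (simp add: eigvec_def)
  also have "\<dots> \<le> (\<rho> * (2 / \<delta>)) * (5/2 * \<delta>)"
    by (rule mult_mono[OF f za]) (use \<rho> \<delta> in simp_all)
  also have "\<dots> = 5 * \<rho>"
    using \<delta> by simp
  finally show ?thesis
    by simp
qed

end

lemma hilbert_pair_complex_inner_domain:
  assumes "hilbert_pair J ipW ipV Vs"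
  shows "complex_inner_domain J Vs ipW"
proof -
  have "complex_structure J" "complex_subspace J Vs" "complex_inner_on J UNIV ipW"
    "\<And>x. norm x = sqrt (Re (ipW x x))"
    using assms unfolding hilbert_pair_def by blast+
  then show ?thesis
    by unfold_locales
qed

theorem theoremt:
  fixes J :: "'w::{real_normed_vector,complete_space} \<Rightarrow> 'w"
    and ipW ipV :: "'w \<Rightarrow> 'w \<Rightarrow> complex"
    and Vs :: "'w set"
    and L :: "'w \<Rightarrow> 'w" and LN :: "nat \<Rightarrow> 'w \<Rightarrow> 'w"
    and lam :: complex and \<delta> :: real and t :: real and R :: "real \<Rightarrow> real"
    and lamN :: "nat \<Rightarrow> complex"
  assumes hp: "hilbert_pair J ipW ipV Vs"
    and L_bd: "bounded_op_VW J ipV Vs L" and L_sa: "self_adjoint_on ipW Vs L" and L_pp: "pure_point J Vs L"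
    and LN_bd: "\<And>N. bounded_op_VW J ipV Vs (LN N)" and LN_sa: "\<And>N. self_adjoint_on ipW Vs (LN N)"
    and LN_pp: "\<And>N. pure_point J Vs (LN N)"
    and lam_eig: "eigenvalue_of J Vs L lam" and lam_fin: "finite_geom_mult J Vs L lam"
    and delta_pos: "\<delta> > 0"
    and gap: "\<forall>\<mu>\<in>spec J Vs L. \<mu> \<noteq> lam \<longrightarrow> cmod (\<mu> - lam) > 3 * \<delta>"
    and inv: "\<exists>N0. \<forall>N. real N > N0 \<longrightarrow>
                 (\<forall>z. \<delta> \<le> cmod (z - lam) \<and> cmod (z - lam) \<le> 2 * \<delta> \<longrightarrow> z \<in> resolvent_set J Vs (LN N))"
    and conv1: "\<forall>e>0. \<exists>M. \<forall>N\<ge>M. \<forall>z. \<delta> \<le> cmod (z - lam) \<and> cmod (z - lam) \<le> 2 * \<delta> \<longrightarrow>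
                 (\<forall>\<mu> v. eigvec J Vs (LN N) \<mu> v \<and> norm v = 1 \<and> cmod (\<mu> - lam) \<le> \<delta> \<longrightarrow>
                    norm (resolv J Vs L z (L v - LN N v)) \<le> e)"
    and conv2: "\<forall>e>0. \<exists>M. \<forall>N\<ge>M. \<forall>z. \<delta> \<le> cmod (z - lam) \<and> cmod (z - lam) \<le> 2 * \<delta> \<longrightarrow>
                 (\<forall>\<mu> u. eigvec J Vs L \<mu> u \<and> norm u = 1 \<and> cmod (\<mu> - lam) \<le> \<delta> \<longrightarrow>
                    norm (resolv J Vs (LN N) z (L u - LN N u)) \<le> e)"
    and t_pos: "t > 0"
    and R_cont: "continuous_on {0..} R" and R_nonneg: "\<forall>x\<ge>0. R x \<ge> 0"
    and rate: "\<exists>N1>0. \<forall>N. real N > N1 \<longrightarrow> (\<forall>z. z \<notin> spec J Vs (LN N) \<longrightarrow>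
                 (\<forall>\<mu> u. eigvec J Vs L \<mu> u \<and> norm u = 1 \<and> cmod \<mu> \<le> cmod lam \<longrightarrow>
                    norm (resolv J Vs (LN N) z (L u - LN N u))
                      \<le> R (cmod lam) * (SUP \<mu>'\<in>spec J Vs (LN N). 1 / cmod (z - \<mu>')) * real N powr (- t)))"
    and lamN: "\<exists>M. \<forall>N\<ge>M. eigenvalue_of J Vs (LN N) (lamN N) \<and> cmod (lamN N - lam) < \<delta>"
  shows "\<exists>C>1. \<exists>N0'>1. \<forall>N. real N > N0' \<longrightarrow>
           cmod (lam - lamN N) \<le> C * R (cmod lam) * real N powr (- t)"
proof -
  interpret complex_inner_domain J Vs ipW
    using hp by (rule hilbert_pair_complex_inner_domain)
  have lin: "complex_linear_on J Vs L" "\<And>N. complex_linear_on J Vs (LN N)"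
    using bounded_op_VW_imp_complex_linear_on L_bd LN_bd by blast+
  have sym: "symmetric_on ipW Vs L" "\<And>N. symmetric_on ipW Vs (LN N)"
    using self_adjoint_on_imp_symmetric_on L_sa LN_sa by blast+
  define z where "z = lam + of_real (3/2 * \<delta>)"
  have z: "cmod (z - lam) = 3/2 * \<delta>"
    using delta_pos by (simp add: z_def)
  have "(1/20::real) > 0"
    by simp
  have "eventually (\<lambda>N. cmod (lam - lamN N) \<le> 10 * (R (cmod lam) * real N powr - t)) sequentially"
    using eventually_sequentially_real_threshold[OF inv]
      eventually_sequentially_iff_real_threshold_gt[THEN iffD2, OF rate]
      conv1[rule_format, OF \<open>1/20 > 0\<close>, THEN eventually_sequentially[THEN iffD2]]
      lamN[THEN eventually_sequentially[THEN iffD2]]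
  proof eventually_elim
    case (elim N)
    then obtain v where v: "eigvec J Vs (LN N) (lamN N) v" "norm v = 1"
      using eigvec_sgn[OF lin(2)] unfolding eigenvalue_of_def by (metis eigvec_def norm_sgn)
    have z_res: "z \<in> resolvent_set J Vs (LN N)"
      using elim z delta_pos by simp
    show ?case
    proof (rule eigenvalue_perturbation_bound[OF lin(1,2) sym(1,2) L_pp _ _ z v])
      show "norm (resolv J Vs L z (L v - LN N v)) \<le> 1/20"
        using elim(3)[rule_format, of z "lamN N" v] elim(4) v z delta_pos by simp
      show "norm (resolv J Vs (LN N) z (L u - LN N u))
          \<le> R (cmod lam) * real N powr - t * (SUP \<mu>\<in>spec J Vs (LN N). 1 / cmod (z - \<mu>))"
        if "eigvec J Vs L lam u" "norm u = 1" for u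
        using elim(2)[rule_format, of z lam u] z_res that unfolding spec_def by (simp add: mult_ac)
    qed (use elim v gap z delta_pos R_nonneg in \<open>auto intro: less_imp_le\<close>)
  qed
  then show ?thesis
    unfolding eventually_sequentially_iff_real_threshold_gt[where c = 1]
    by (intro exI[of _ 10]) (simp add: mult.assoc)
qed

end
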